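(* Let $S$ be a finite set and $\mathcal{C}\subseteq 2^S$, and let $A_{\mathcal{C}}=\{2^X\mid X\in\mathcal{D}\}$, where $\mathcal{D}=\{Y\subseteq S\mid\exists X\in\mathcal{C},\ Y\subseteq X\}$ is the downset generated by $\mathcal{C}$ and $2^X=\{Y\subseteq S\mid Y\subseteq X\}$. Then $\mathcal{C}\in\bullet(A_{\mathcal{C}})$.
   Context: For sets $A,B$, the disjoint union $A\,\dot\cup\,B=A\cup B$ is defined only when $A\cap B=\emptyset$, and the subset complement $A\,\dot\setminus\,B=A\setminus B$ is defined only when $B\subseteq A$. For a finite family $\mathcal{G}$ of sets, $\bullet(\mathcal{G})$ is the smallest family of sets containing $\emptyset$ and every member of $\mathcal{G}$ and closed under all well-defined disjoint unions and subset complements. Here members of $\mathcal{G}$ are subsets of $2^S$. *)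

theory Defs
  imports Main
begin

inductive_set bullet :: "'b set set \<Rightarrow> 'b set set" for G :: "'b set set" where
  bullet_empty: "{} \<in> bullet G"
| bullet_gen: "A \<in> G \<Longrightarrow> A \<in> bullet G"
| bullet_dunion: "A \<in> bullet G \<Longrightarrow> B \<in> bullet G \<Longrightarrow> A \<inter> B = {} \<Longrightarrow> A \<union> B \<in> bullet G"
| bullet_sdiff: "A \<in> bullet G \<Longrightarrow> B \<in> bullet G \<Longrightarrow> B \<subseteq> A \<Longrightarrow> A - B \<in> bullet G"

definition powS :: "'a set \<Rightarrow> 'a set \<Rightarrow> 'a set set" where
  "powS S X = {Y. Y \<subseteq> S \<and> Y \<subseteq> X}"

definition downset :: "'a set \<Rightarrow> 'a set set \<Rightarrow> 'a set set" where
  "downset S C = {Y. Y \<subseteq> S \<and> (\<exists>X\<in>C. Y \<subseteq> X)}"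

definition A_fam :: "'a set \<Rightarrow> 'a set set \<Rightarrow> 'a set set set" where
  "A_fam S C = {powS S X | X. X \<in> downset S C}"

end

theory Submission
  imports Defs
begin

text \<open>By induction on X, each singleton {X}
is in \<bullet>(A_C): it is 2^X minus the disjoint union of the singletons {Y} of the proper
subsets Y of X. Then C, being finite, is the disjoint union of its singletons.\<close>

lemma finite_in_bullet:
  assumes "finite F" and "\<And>Y. Y \<in> F \<Longrightarrow> {Y} \<in> bullet G"
  shows "F \<in> bullet G"
  using assms
proof (induction F rule: finite_induct)
  case empty
  show ?case by (rule bullet_empty)
next
  case (insert Y F)
  have "{Y} \<union> F \<in> bullet G"
    by (rule bullet_dunion) (use insert in auto)
  then show ?case by simp
qed

lemma singleton_in_bullet_if_Pow_in_bullet: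
  assumes "finite X" and "\<And>Y. Y \<subseteq> X \<Longrightarrow> Pow Y \<in> bullet G"
  shows "{X} \<in> bullet G"
  using assms
proof (induction X rule: finite_psubset_induct)
  case (psubset X)
  have proper_subsets: "Pow X - {X} \<in> bullet G"
  proof (rule finite_in_bullet)
    show "finite (Pow X - {X})" using psubset.hyps by simp
  next
    fix Y assume "Y \<in> Pow X - {X}"
    then have "Y \<subset> X" by auto
    with psubset.prems show "{Y} \<in> bullet G"
      by (intro psubset.IH) (auto intro: finite_subset)
  qed
  have "Pow X - (Pow X - {X}) \<in> bullet G"
    using psubset.prems[OF subset_refl] proper_subsets by (rule bullet_sdiff) auto
  moreover have "Pow X - (Pow X - {X}) = {X}" by auto
  ultimately show ?case by simp
qed

lemma Pow_in_A_fam: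
  assumes "X \<in> downset S C"
  shows "Pow X \<in> A_fam S C"
proof -
  have "powS S X = Pow X" using assms unfolding downset_def powS_def by auto
  with assms show ?thesis unfolding A_fam_def by blast
qed

theorem lemma5p7:
  fixes S :: "'a set" and C :: "'a set set"
  assumes "finite S" and "C \<subseteq> Pow S"
  shows "C \<in> bullet (A_fam S C)"
proof (rule finite_in_bullet)
  show "finite C" using assms by (meson finite_Pow_iff finite_subset)
next
  fix X assume "X \<in> C"
  with assms(2) have X_down: "X \<in> downset S C" unfolding downset_def by auto
  show "{X} \<in> bullet (A_fam S C)"
  proof (rule singleton_in_bullet_if_Pow_in_bullet)
    show "finite X" using X_down assms(1) unfolding downset_def by (auto intro: finite_subset)
  next
    fix Y assume "Y \<subseteq> X"
    with X_down have "Y \<in> downset S C" unfolding downset_def by auto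
    then show "Pow Y \<in> bullet (A_fam S C)" by (intro bullet_gen Pow_in_A_fam)
  qed
qed

end
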